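(* Let $p$ be a prime, $\Gamma\subset\mathbb{F}_p^*$ a multiplicative subgroup, and $A,B\subseteq\mathbb{F}_p$ two sets. Let $g:\mathbb{F}_p\to\mathbb{R}_{\ge0}$ be an even $\Gamma$-invariant function supported on $S_\Gamma(A-A)$. Suppose that $A-B\subseteq\Gamma\sqcup\{0\}$ and $$|B|\sum_x g(x)(A\circ A)(x)\ge3\sum_x g(x)(A\circ B)(x).$$ Then $$\left(\sum_x g(x)(A\circ A)(x)\right)^2\ll\frac{\mathsf{T}(A,B)}{|B|^2|\Gamma|}\cdot\sum_x g^2(x)(\Gamma\circ\Gamma)(x).$$
   Context: For $Q\subseteq\mathbb{F}_p$, $S_\Gamma(Q)$ is the minimal $\Gamma$-invariant set containing $Q$ (i.e. $\Gamma Q=\{\gamma x:\gamma\in\Gamma,x\in Q\}$). Sets are identified with indicator functions; $(X\circ Y)(x)=\sum_yX(y)Y(y+x)$. $g$ even means $g(-x)=g(x)$; $\Gamma$-invariant means $g(\gamma x)=g(x)$ for $\gamma\in\Gamma$. $\mathsf{E}^\times(X,Y)=|\{x_1y_1=x_2y_2: x_i\in X,y_i\in Y\}|$ and $\mathsf{T}(A,B)=\sum_{b,b'\in B}\mathsf{E}^\times(A-b,A-b')$. $X\ll Y$ means $X\le cY$ with an absolute constant $c$. *)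

theory Defs
  imports Complex_Main "HOL-Computational_Algebra.Primes"
begin

text \<open>F_p is represented by the residues {..<p} (naturals) with arithmetic mod p.\<close>

definition fp_sub :: "nat \<Rightarrow> nat \<Rightarrow> nat \<Rightarrow> nat" where
  "fp_sub p x y = (x + p - y) mod p"

definition fp_neg :: "nat \<Rightarrow> nat \<Rightarrow> nat" where
  "fp_neg p x = (p - x) mod p"

definition fp_mul :: "nat \<Rightarrow> nat \<Rightarrow> nat \<Rightarrow> nat" where
  "fp_mul p x y = (x * y) mod p"

definition fp_add :: "nat \<Rightarrow> nat \<Rightarrow> nat \<Rightarrow> nat" where
  "fp_add p x y = (x + y) mod p"

definition mult_subgroup :: "nat \<Rightarrow> nat set \<Rightarrow> bool" where
  "mult_subgroup p G \<longleftrightarrow> G \<subseteq> {1..<p} \<and> 1 \<in> G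
     \<and> (\<forall>x\<in>G. \<forall>y\<in>G. fp_mul p x y \<in> G)
     \<and> (\<forall>x\<in>G. \<exists>y\<in>G. fp_mul p x y = 1)"

definition diffset :: "nat \<Rightarrow> nat set \<Rightarrow> nat set \<Rightarrow> nat set" where
  "diffset p X Y = {fp_sub p x y | x y. x \<in> X \<and> y \<in> Y}"

definition shift :: "nat \<Rightarrow> nat set \<Rightarrow> nat \<Rightarrow> nat set" where
  "shift p X b = {fp_sub p x b | x. x \<in> X}"

definition S_Gamma :: "nat \<Rightarrow> nat set \<Rightarrow> nat set \<Rightarrow> nat set" where
  "S_Gamma p G Q = {fp_mul p g x | g x. g \<in> G \<and> x \<in> Q}"

definition circ :: "nat \<Rightarrow> nat set \<Rightarrow> nat set \<Rightarrow> nat \<Rightarrow> real" where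
  "circ p X Y x = real (card {y \<in> {..<p}. y \<in> X \<and> fp_add p y x \<in> Y})"

definition Emult :: "nat \<Rightarrow> nat set \<Rightarrow> nat set \<Rightarrow> nat" where
  "Emult p X Y = card {(x1, y1, x2, y2). x1 \<in> X \<and> y1 \<in> Y \<and> x2 \<in> X \<and> y2 \<in> Y
                        \<and> fp_mul p x1 y1 = fp_mul p x2 y2}"

definition T_AB :: "nat \<Rightarrow> nat set \<Rightarrow> nat set \<Rightarrow> nat" where
  "T_AB p A B = (\<Sum>b\<in>B. \<Sum>b'\<in>B. Emult p (shift p A b) (shift p A b'))"

end

theory Submission
  imports Defs "HOL-Analysis.Convex"
begin

(* For b \<in> B and a, a' \<in> A - {b}, the hypothesis A - B \<subseteq> \<Gamma> \<union> {0} gives a ratio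
   l = (a' - b)/(a - b) \<in> \<Gamma>, and a' - a = (a - b)(l - 1), so g(a' - a) = g(l - 1) by \<Gamma>-invariance.
   Hence M = \<Sum>_b \<Sum>_{a,a' \<in> A-{b}} g(a' - a) equals \<Sum>_l g(l - 1) r(l), where r(l) counts the
   triples (b, a, a') of ratio l. Two triples of equal ratio give a solution of
   (a1' - b)(a2 - b') = (a1 - b)(a2' - b'), so \<Sum>_l r(l)^2 \<le> T(A,B); and
   |\<Gamma>| \<Sum>_l g(l - 1)^2 = \<Sum>_x g(x)^2 (\<Gamma>\<circ>\<Gamma>)(x). Cauchy-Schwarz thus bounds M^2 |\<Gamma>|.
   Conversely, removing the pairs through b costs at most 2 \<Sum>_a g(b - a) by evenness, so
   |B| \<Sum> g (A\<circ>A) \<le> M + 2 \<Sum> g (A\<circ>B), which the hypothesis turns into |B| \<Sum> g (A\<circ>A) \<le> 3M.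
   Together these give the bound with constant 9. *)

lemma fp_sub_int: "y \<le> p \<Longrightarrow> int (fp_sub p x y) = (int x - int y) mod int p"
proof -
  assume "y \<le> p"
  then have "int (x + p - y) = (int x - int y) + int p"
    by simp
  then show ?thesis
    unfolding fp_sub_def by (metis of_nat_mod mod_add_self2)
qed

lemma fp_neg_int: "x \<le> p \<Longrightarrow> int (fp_neg p x) = (- int x) mod int p"
proof -
  assume "x \<le> p"
  then have "int (p - x) = - int x + int p"
    by simp
  then show ?thesis
    unfolding fp_neg_def by (metis of_nat_mod mod_add_self2)
qed

lemma fp_mul_int: "int (fp_mul p x y) = (int x * int y) mod int p"
  unfolding fp_mul_def by (simp add: of_nat_mod)

lemma fp_add_int: "int (fp_add p x y) = (int x + int y) mod int p"
  unfolding fp_add_def by (simp add: of_nat_mod)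

lemma fp_sub_less: "0 < p \<Longrightarrow> fp_sub p x y < p"
  unfolding fp_sub_def by simp

lemma fp_mul_less: "0 < p \<Longrightarrow> fp_mul p x y < p"
  unfolding fp_mul_def by simp

lemma fp_add_less: "0 < p \<Longrightarrow> fp_add p x y < p"
  unfolding fp_add_def by simp

lemma fp_neg_less: "0 < p \<Longrightarrow> fp_neg p x < p"
  unfolding fp_neg_def by simp

lemma fp_eq_iff_int_mod: "x < p \<Longrightarrow> y < p \<Longrightarrow> x = y \<longleftrightarrow> int x mod int p = int y mod int p"
  by simp

lemma fp_neg_sub: "a < p \<Longrightarrow> b < p \<Longrightarrow> fp_neg p (fp_sub p b a) = fp_sub p a b"
  by (subst fp_eq_iff_int_mod[of _ p])
     (simp_all add: fp_sub_less fp_neg_less fp_neg_int fp_sub_int less_imp_le mod_simps)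

lemma fp_sub_add_cancel: "x < p \<Longrightarrow> y < p \<Longrightarrow> fp_sub p (fp_add p y x) y = x"
  by (subst fp_eq_iff_int_mod[of _ p])
     (simp_all add: fp_sub_less fp_add_int fp_sub_int less_imp_le mod_simps)

lemma fp_add_sub_cancel: "z < p \<Longrightarrow> y < p \<Longrightarrow> fp_add p y (fp_sub p z y) = z"
  by (subst fp_eq_iff_int_mod[of _ p])
     (simp_all add: fp_add_less fp_add_int fp_sub_int less_imp_le mod_simps)

lemma fp_sub_sub_cancel:
  "a < p \<Longrightarrow> a' < p \<Longrightarrow> b < p \<Longrightarrow> fp_sub p (fp_sub p a' b) (fp_sub p a b) = fp_sub p a' a"
  by (subst fp_eq_iff_int_mod[of _ p])
     (simp_all add: fp_sub_less fp_sub_int less_imp_le mod_simps)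

lemma fp_mul_sub_one: "0 < p \<Longrightarrow> u < p \<Longrightarrow> fp_sub p (fp_mul p l u) u = fp_mul p u (fp_sub p l 1)"
  by (subst fp_eq_iff_int_mod[of _ p])
     (simp_all add: fp_sub_less fp_mul_less fp_mul_int fp_sub_int less_imp_le mod_simps algebra_simps)

lemma fp_mul_commute: "fp_mul p x y = fp_mul p y x"
  unfolding fp_mul_def by (simp add: mult.commute)

lemma fp_mul_exchange: "fp_mul p (fp_mul p l u) u' = fp_mul p u (fp_mul p l u')"
proof -
  have "int (fp_mul p (fp_mul p l u) u') = int (fp_mul p u (fp_mul p l u'))"
    by (simp add: fp_mul_int mod_mult_left_eq mod_mult_right_eq ac_simps)
  then show ?thesis
    by simp
qed

lemma fp_sub_eq_0_iff:
  assumes "a < p" "b < p"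
  shows "fp_sub p a b = 0 \<longleftrightarrow> a = b"
proof -
  have "fp_sub p a b = 0 \<longleftrightarrow> (int a - int b) mod int p = 0"
    using assms by (simp flip: fp_sub_int)
  also have "\<dots> \<longleftrightarrow> int a mod int p = int b mod int p"
    by (simp add: mod_eq_dvd_iff dvd_eq_mod_eq_0)
  finally show ?thesis
    using assms by simp
qed

lemma fp_sub_right_inj: "x < p \<Longrightarrow> y < p \<Longrightarrow> b < p \<Longrightarrow> fp_sub p x b = fp_sub p y b \<Longrightarrow> x = y"
  by (metis fp_add_sub_cancel)

lemma fp_mul_right_cancel:
  assumes "prime p" "u < p" "u \<noteq> 0" "l < p" "l' < p" "fp_mul p l u = fp_mul p l' u"
  shows "l = l'"
proof -
  have "(int l * int u) mod int p = (int l' * int u) mod int p"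
    using arg_cong[OF assms(6), of int] by (simp add: fp_mul_int)
  then have "int p dvd (int l - int l') * int u"
    by (simp add: mod_eq_dvd_iff left_diff_distrib)
  moreover have "\<not> int p dvd int u"
    using assms(2,3) by (simp add: nat_dvd_not_less)
  ultimately have "int p dvd int l - int l'"
    using assms(1) prime_dvd_mult_iff by (metis prime_nat_int_transfer)
  then show ?thesis
    using assms(4,5) by (simp add: mod_eq_dvd_iff[symmetric])
qed

lemma mult_subgroup_memD: "mult_subgroup p G \<Longrightarrow> x \<in> G \<Longrightarrow> 0 < x \<and> x < p"
  unfolding mult_subgroup_def by auto

lemma mult_subgroup_finite: "mult_subgroup p G \<Longrightarrow> finite G"
  unfolding mult_subgroup_def by (auto intro: finite_subset)

lemma mult_subgroup_card_pos: "mult_subgroup p G \<Longrightarrow> 0 < card G"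
  using mult_subgroup_finite unfolding mult_subgroup_def by (auto simp: card_gt_0_iff)

lemma fp_mul_right_inverse:
  assumes "0 < p" "fp_mul p u u' = 1" "v < p"
  shows "fp_mul p (fp_mul p v u') u = v"
proof -
  have "int (fp_mul p (fp_mul p v u') u) = (int v * ((int u * int u') mod int p)) mod int p"
    by (simp add: fp_mul_int mod_mult_left_eq mod_mult_right_eq ac_simps)
  also have "\<dots> = int v"
    using assms(2,3) fp_mul_int[of p u u'] by simp
  finally show ?thesis
    by simp
qed

lemma mult_subgroup_ratio:
  assumes "mult_subgroup p G" "u \<in> G" "v \<in> G"
  shows "\<exists>l\<in>G. v = fp_mul p l u"
proof -
  have "0 < p"
    using mult_subgroup_memD[OF assms(1,2)] by simp
  obtain u' where "u' \<in> G" "fp_mul p u u' = 1"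
    using assms(1,2) unfolding mult_subgroup_def by blast
  then show ?thesis
    using assms \<open>0 < p\<close> fp_mul_right_inverse[of p u u' v] mult_subgroup_memD[of p G v]
    unfolding mult_subgroup_def by metis
qed

lemma mult_subgroup_mul_bij:
  assumes "prime p" "mult_subgroup p G" "w \<in> G"
  shows "bij_betw (fp_mul p w) G G"
proof -
  have "inj_on (fp_mul p w) G"
  proof (rule inj_onI)
    fix x y assume "x \<in> G" "y \<in> G" "fp_mul p w x = fp_mul p w y"
    then show "x = y"
      using fp_mul_right_cancel[OF assms(1), of w x y] mult_subgroup_memD[OF assms(2)] assms(3)
      by (metis fp_mul_commute less_not_refl2)
  qed
  moreover have "fp_mul p w ` G \<subseteq> G"
    using assms(2,3) unfolding mult_subgroup_def by auto
  ultimately show ?thesis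
    using endo_inj_surj[OF mult_subgroup_finite[OF assms(2)]] by (simp add: bij_betw_def)
qed

lemma sum_mult_subgroup_sub:
  fixes F :: "nat \<Rightarrow> real"
  assumes "prime p" "mult_subgroup p G" "w \<in> G"
    and invariant: "\<forall>x<p. \<forall>\<gamma>\<in>G. F (fp_mul p \<gamma> x) = F x"
  shows "(\<Sum>z\<in>G. F (fp_sub p z w)) = (\<Sum>l\<in>G. F (fp_sub p l 1))"
proof -
  have p0: "0 < p"
    using assms(1) prime_gt_0_nat by blast
  have "(\<Sum>z\<in>G. F (fp_sub p z w)) = (\<Sum>l\<in>G. F (fp_sub p (fp_mul p w l) w))"
    using sum.reindex_bij_betw[OF mult_subgroup_mul_bij[OF assms(1-3)], of "\<lambda>z. F (fp_sub p z w)"]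
    by simp
  also have "\<dots> = (\<Sum>l\<in>G. F (fp_sub p l 1))"
  proof (rule sum.cong[OF refl])
    fix l assume "l \<in> G"
    have "fp_sub p (fp_mul p w l) w = fp_mul p w (fp_sub p l 1)"
      using fp_mul_sub_one[OF p0, of w l] mult_subgroup_memD[OF assms(2,3)]
      by (simp add: fp_mul_commute)
    then show "F (fp_sub p (fp_mul p w l) w) = F (fp_sub p l 1)"
      using invariant fp_sub_less[OF p0] assms(3) by simp
  qed
  finally show ?thesis .
qed

lemma circ_weighted_sum:
  assumes "0 < p" "X \<subseteq> {..<p}" "Y \<subseteq> {..<p}"
  shows "(\<Sum>x<p. f x * circ p X Y x) = (\<Sum>y\<in>X. \<Sum>z\<in>Y. f (fp_sub p z y))"
proof -
  have "finite X"
    using assms(2) finite_subset by blast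
  have circ_sum: "circ p X Y x = (\<Sum>y\<in>X. if fp_add p y x \<in> Y then 1 else 0)" for x
  proof -
    have "{y \<in> {..<p}. y \<in> X \<and> fp_add p y x \<in> Y} = {y \<in> X. fp_add p y x \<in> Y}"
      using assms(2) by auto
    then show ?thesis
      unfolding circ_def using sum.inter_filter[OF \<open>finite X\<close>, of "\<lambda>_. 1::real"] by simp
  qed
  have translate: "(\<Sum>x<p. if fp_add p y x \<in> Y then f x else 0) = (\<Sum>z\<in>Y. f (fp_sub p z y))"
    if "y \<in> X" for y
  proof -
    have "y < p"
      using that assms(2) by auto
    have "(\<Sum>x<p. if fp_add p y x \<in> Y then f x else 0) = (\<Sum>x\<in>{x\<in>{..<p}. fp_add p y x \<in> Y}. f x)"
      using sum.inter_filter[of "{..<p}" f "\<lambda>x. fp_add p y x \<in> Y"] by simp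
    also have "\<dots> = (\<Sum>z\<in>Y. f (fp_sub p z y))"
      using \<open>y < p\<close> assms
      by (intro sum.reindex_bij_witness[where j = "fp_add p y" and i = "\<lambda>z. fp_sub p z y"])
         (auto simp: fp_sub_add_cancel fp_add_sub_cancel fp_sub_less)
    finally show ?thesis .
  qed
  have "(\<Sum>x<p. f x * circ p X Y x) = (\<Sum>x<p. \<Sum>y\<in>X. if fp_add p y x \<in> Y then f x else 0)"
    unfolding circ_sum by (simp add: sum_distrib_left if_distrib cong: if_cong)
  also have "\<dots> = (\<Sum>y\<in>X. \<Sum>x<p. if fp_add p y x \<in> Y then f x else 0)"
    by (rule sum.swap)
  also have "\<dots> = (\<Sum>y\<in>X. \<Sum>z\<in>Y. f (fp_sub p z y))"
    using translate by simp
  finally show ?thesis .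
qed

lemma sum_sum_le_sum_sum_remove:
  fixes F :: "'a \<Rightarrow> 'a \<Rightarrow> real"
  assumes "finite A" "\<And>x y. 0 \<le> F x y"
  shows "(\<Sum>a\<in>A. \<Sum>a'\<in>A. F a a')
    \<le> (\<Sum>a\<in>A-{b}. \<Sum>a'\<in>A-{b}. F a a') + (\<Sum>a'\<in>A. F b a') + (\<Sum>a\<in>A. F a b)"
proof (cases "b \<in> A")
  case False
  then show ?thesis
    using assms(2) by (simp add: sum_nonneg)
next
  case True
  have "(\<Sum>a\<in>A. \<Sum>a'\<in>A. F a a') = (\<Sum>a'\<in>A. F b a') + (\<Sum>a\<in>A-{b}. \<Sum>a'\<in>A. F a a')"
    using sum.remove[OF assms(1) True] by blast
  also have "(\<Sum>a\<in>A-{b}. \<Sum>a'\<in>A. F a a') = (\<Sum>a\<in>A-{b}. F a b + (\<Sum>a'\<in>A-{b}. F a a'))"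
    using sum.remove[OF assms(1) True] by (intro sum.cong) auto
  also have "\<dots> = (\<Sum>a\<in>A-{b}. F a b) + (\<Sum>a\<in>A-{b}. \<Sum>a'\<in>A-{b}. F a a')"
    by (rule sum.distrib)
  also have "(\<Sum>a\<in>A-{b}. F a b) \<le> (\<Sum>a\<in>A. F a b)"
    using assms by (intro sum_mono2) auto
  finally show ?thesis
    by linarith
qed

definition diff_sum_avoiding :: "nat \<Rightarrow> nat set \<Rightarrow> nat set \<Rightarrow> (nat \<Rightarrow> real) \<Rightarrow> real" where
  "diff_sum_avoiding p A B g = (\<Sum>b\<in>B. \<Sum>a\<in>A-{b}. \<Sum>a'\<in>A-{b}. g (fp_sub p a' a))"

lemma card_mult_sum_diff_le_avoiding:
  fixes g :: "nat \<Rightarrow> real"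
  assumes "0 < p" "A \<subseteq> {..<p}" "B \<subseteq> {..<p}"
    and nonneg: "\<forall>x<p. 0 \<le> g x" and even: "\<forall>x<p. g (fp_neg p x) = g x"
  shows "real (card B) * (\<Sum>a\<in>A. \<Sum>a'\<in>A. g (fp_sub p a' a))
    \<le> diff_sum_avoiding p A B g + 2 * (\<Sum>b\<in>B. \<Sum>a\<in>A. g (fp_sub p b a))"
proof -
  have "finite A"
    using assms(2) finite_subset by blast
  have row: "(\<Sum>a\<in>A. \<Sum>a'\<in>A. g (fp_sub p a' a))
      \<le> (\<Sum>a\<in>A-{b}. \<Sum>a'\<in>A-{b}. g (fp_sub p a' a)) + 2 * (\<Sum>a\<in>A. g (fp_sub p b a))"
    if "b \<in> B" for b
  proof -
    have "g (fp_sub p a b) = g (fp_sub p b a)" if "a \<in> A" for a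
      using even fp_neg_sub[of a p b] fp_sub_less[OF assms(1)] that \<open>b \<in> B\<close> assms(2,3)
      by (metis lessThan_iff subsetD)
    then show ?thesis
      using sum_sum_le_sum_sum_remove[OF \<open>finite A\<close>, of "\<lambda>a a'. g (fp_sub p a' a)" b]
        nonneg fp_sub_less[OF assms(1)] by simp
  qed
  have "real (card B) * (\<Sum>a\<in>A. \<Sum>a'\<in>A. g (fp_sub p a' a))
      \<le> (\<Sum>b\<in>B. (\<Sum>a\<in>A-{b}. \<Sum>a'\<in>A-{b}. g (fp_sub p a' a)) + 2 * (\<Sum>a\<in>A. g (fp_sub p b a)))"
    using sum_mono[OF row] by simp
  then show ?thesis
    by (simp add: diff_sum_avoiding_def sum.distrib sum_distrib_left)
qed

lemma card_mult_circ_le_diff_sum_avoiding: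
  fixes g :: "nat \<Rightarrow> real"
  assumes "0 < p" "A \<subseteq> {..<p}" "B \<subseteq> {..<p}"
    and "\<forall>x<p. 0 \<le> g x" "\<forall>x<p. g (fp_neg p x) = g x"
    and popular: "3 * (\<Sum>x<p. g x * circ p A B x) \<le> real (card B) * (\<Sum>x<p. g x * circ p A A x)"
  shows "real (card B) * (\<Sum>x<p. g x * circ p A A x) \<le> 3 * diff_sum_avoiding p A B g"
proof -
  have "(\<Sum>x<p. g x * circ p A B x) = (\<Sum>b\<in>B. \<Sum>a\<in>A. g (fp_sub p b a))"
    unfolding circ_weighted_sum[OF assms(1-3)] by (rule sum.swap)
  then have "real (card B) * (\<Sum>x<p. g x * circ p A A x)
      \<le> diff_sum_avoiding p A B g + 2 * (\<Sum>x<p. g x * circ p A B x)"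
    using card_mult_sum_diff_le_avoiding[OF assms(1-5)] circ_weighted_sum[OF assms(1,2,2)] by simp
  then show ?thesis
    using popular by linarith
qed

definition ratio_triples :: "nat \<Rightarrow> nat set \<Rightarrow> nat set \<Rightarrow> nat \<Rightarrow> (nat \<times> nat \<times> nat) set" where
  "ratio_triples p A B l =
     {(b, a, a'). b \<in> B \<and> a \<in> A - {b} \<and> a' \<in> A - {b} \<and> fp_sub p a' b = fp_mul p l (fp_sub p a b)}"

lemma ratio_triples_subset: "ratio_triples p A B l \<subseteq> B \<times> A \<times> A"
  unfolding ratio_triples_def by auto

lemma finite_ratio_triples: "finite A \<Longrightarrow> finite B \<Longrightarrow> finite (ratio_triples p A B l)"
  using ratio_triples_subset by (rule finite_subset) simp

lemma ratio_triples_unique: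
  assumes "prime p" "A \<subseteq> {..<p}" "B \<subseteq> {..<p}" "l < p" "l' < p"
    and "t \<in> ratio_triples p A B l" "t \<in> ratio_triples p A B l'"
  shows "l = l'"
proof -
  obtain b a a' where t: "t = (b, a, a')"
    by (cases t)
  have "b \<in> B" "a \<in> A" "a \<noteq> b"
    and "fp_mul p l (fp_sub p a b) = fp_mul p l' (fp_sub p a b)"
    using assms(6,7) unfolding t ratio_triples_def by auto
  moreover have "fp_sub p a b \<noteq> 0"
    using calculation fp_sub_eq_0_iff[of a p b] assms(2,3) by auto
  moreover have "fp_sub p a b < p"
    using assms(1) fp_sub_less prime_gt_0_nat by blast
  ultimately show ?thesis
    using fp_mul_right_cancel[OF assms(1) _ _ assms(4,5)] by blast
qed

definition mult_energy_quadruples :: "nat \<Rightarrow> nat set \<Rightarrow> nat set \<Rightarrow> (nat \<times> nat \<times> nat \<times> nat) set" where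
  "mult_energy_quadruples p X Y =
     {(x1, y1, x2, y2). x1 \<in> X \<and> y1 \<in> Y \<and> x2 \<in> X \<and> y2 \<in> Y \<and> fp_mul p x1 y1 = fp_mul p x2 y2}"

lemma finite_mult_energy_quadruples:
  "finite X \<Longrightarrow> finite Y \<Longrightarrow> finite (mult_energy_quadruples p X Y)"
  by (rule finite_subset[of _ "X \<times> Y \<times> X \<times> Y"]) (auto simp: mult_energy_quadruples_def)

lemma finite_shift: "finite A \<Longrightarrow> finite (shift p A b)"
  unfolding shift_def by simp

lemma T_AB_eq_card_Sigma:
  assumes "finite A" "finite B"
  shows "T_AB p A B = card (SIGMA b:B. SIGMA b':B. mult_energy_quadruples p (shift p A b) (shift p A b'))"
  using assms finite_mult_energy_quadruples[OF finite_shift finite_shift]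
  by (simp add: T_AB_def Emult_def mult_energy_quadruples_def)

definition ratio_quadruple ::
    "nat \<Rightarrow> nat \<times> (nat \<times> nat \<times> nat) \<times> (nat \<times> nat \<times> nat) \<Rightarrow> nat \<times> nat \<times> nat \<times> nat \<times> nat \<times> nat" where
  "ratio_quadruple p = (\<lambda>(l, (b, a1, a1'), (b', a2, a2')).
     (b, b', fp_sub p a1' b, fp_sub p a2 b', fp_sub p a1 b, fp_sub p a2' b'))"

lemma inj_on_ratio_quadruple:
  assumes "prime p" "A \<subseteq> {..<p}" "B \<subseteq> {..<p}" "L \<subseteq> {..<p}"
  shows "inj_on (ratio_quadruple p) (SIGMA l:L. ratio_triples p A B l \<times> ratio_triples p A B l)"
proof (rule inj_onI)
  fix x y
  assume x: "x \<in> (SIGMA l:L. ratio_triples p A B l \<times> ratio_triples p A B l)"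
    and y: "y \<in> (SIGMA l:L. ratio_triples p A B l \<times> ratio_triples p A B l)"
    and "ratio_quadruple p x = ratio_quadruple p y"
  obtain l b a1 a1' b' a2 a2' where x_eq: "x = (l, (b, a1, a1'), (b', a2, a2'))"
    by (metis prod.exhaust)
  obtain m c c1 c1' c' c2 c2' where y_eq: "y = (m, (c, c1, c1'), (c', c2, c2'))"
    by (metis prod.exhaust)
  have R: "(b, a1, a1') \<in> ratio_triples p A B l" "(b', a2, a2') \<in> ratio_triples p A B l"
    "(c, c1, c1') \<in> ratio_triples p A B m" "(c', c2, c2') \<in> ratio_triples p A B m"
    and "l \<in> L" "m \<in> L"
    using x y unfolding x_eq y_eq by auto
  then have "b \<in> B" "b' \<in> B" "a1 \<in> A" "a1' \<in> A" "a2 \<in> A" "a2' \<in> A" "c1 \<in> A" "c1' \<in> A" "c2 \<in> A" "c2' \<in> A"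
    unfolding ratio_triples_def by auto
  then have lt: "b < p" "b' < p" "a1 < p" "a1' < p" "a2 < p" "a2' < p" "c1 < p" "c1' < p" "c2 < p" "c2' < p"
    using assms(2,3) by auto
  have "b = c" "b' = c'" "fp_sub p a1 b = fp_sub p c1 b" "fp_sub p a1' b = fp_sub p c1' b"
    "fp_sub p a2 b' = fp_sub p c2 b'" "fp_sub p a2' b' = fp_sub p c2' b'"
    using \<open>ratio_quadruple p x = ratio_quadruple p y\<close> unfolding x_eq y_eq ratio_quadruple_def by auto
  moreover from this have "a1 = c1" "a1' = c1'" "a2 = c2" "a2' = c2'"
    using fp_sub_right_inj lt by blast+
  moreover from calculation have "l = m"
    using ratio_triples_unique[OF assms(1-3)] R(1,3) \<open>l \<in> L\<close> \<open>m \<in> L\<close> assms(4) by blast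
  ultimately show "x = y"
    unfolding x_eq y_eq by simp
qed

lemma ratio_quadruple_image:
  "ratio_quadruple p ` (SIGMA l:L. ratio_triples p A B l \<times> ratio_triples p A B l)
     \<subseteq> (SIGMA b:B. SIGMA b':B. mult_energy_quadruples p (shift p A b) (shift p A b'))"
proof
  fix z assume "z \<in> ratio_quadruple p ` (SIGMA l:L. ratio_triples p A B l \<times> ratio_triples p A B l)"
  then obtain x where x: "x \<in> (SIGMA l:L. ratio_triples p A B l \<times> ratio_triples p A B l)"
    and z: "z = ratio_quadruple p x"
    by blast
  obtain l b a1 a1' b' a2 a2' where x_eq: "x = (l, (b, a1, a1'), (b', a2, a2'))"
    by (metis prod.exhaust)
  have "(b, a1, a1') \<in> ratio_triples p A B l" "(b', a2, a2') \<in> ratio_triples p A B l"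
    using x unfolding x_eq by auto
  then have mem: "b \<in> B" "b' \<in> B" "a1 \<in> A" "a1' \<in> A" "a2 \<in> A" "a2' \<in> A"
    and "fp_sub p a1' b = fp_mul p l (fp_sub p a1 b)" "fp_sub p a2' b' = fp_mul p l (fp_sub p a2 b')"
    unfolding ratio_triples_def by auto
  then have "fp_mul p (fp_sub p a1' b) (fp_sub p a2 b') = fp_mul p (fp_sub p a1 b) (fp_sub p a2' b')"
    by (simp add: fp_mul_exchange)
  then show "z \<in> (SIGMA b:B. SIGMA b':B. mult_energy_quadruples p (shift p A b) (shift p A b'))"
    using mem unfolding z x_eq ratio_quadruple_def mult_energy_quadruples_def shift_def by simp blast
qed

lemma sum_card_ratio_triples_sq_le_T_AB:
  assumes "prime p" "A \<subseteq> {..<p}" "B \<subseteq> {..<p}" "L \<subseteq> {..<p}"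
  shows "(\<Sum>l\<in>L. card (ratio_triples p A B l) ^ 2) \<le> T_AB p A B"
proof -
  have "finite A" "finite B" "finite L"
    using assms(2-4) finite_subset by blast+
  then have "(\<Sum>l\<in>L. card (ratio_triples p A B l) ^ 2)
      = card (SIGMA l:L. ratio_triples p A B l \<times> ratio_triples p A B l)"
    using finite_ratio_triples by (simp add: card_cartesian_product power2_eq_square)
  also have "\<dots> \<le> card (SIGMA b:B. SIGMA b':B. mult_energy_quadruples p (shift p A b) (shift p A b'))"
    using \<open>finite A\<close> \<open>finite B\<close> finite_mult_energy_quadruples[OF finite_shift finite_shift]
    by (intro card_inj_on_le[OF inj_on_ratio_quadruple[OF assms] ratio_quadruple_image]) blast
  also have "\<dots> = T_AB p A B"
    using T_AB_eq_card_Sigma[OF \<open>finite A\<close> \<open>finite B\<close>] by simp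
  finally show ?thesis .
qed

lemma diffset_sub_mem:
  assumes "diffset p A B \<subseteq> G \<union> {0}" "A \<subseteq> {..<p}" "B \<subseteq> {..<p}" "a \<in> A" "b \<in> B" "a \<noteq> b"
  shows "fp_sub p a b \<in> G"
proof -
  have "fp_sub p a b \<in> diffset p A B"
    unfolding diffset_def using assms(4,5) by blast
  moreover have "fp_sub p a b \<noteq> 0"
    using fp_sub_eq_0_iff[of a p b] assms(2-6) by auto
  ultimately show ?thesis
    using assms(1) by (meson Un_iff in_mono singletonD)
qed

lemma Sigma_remove_eq_UN_ratio_triples:
  assumes "mult_subgroup p G" "diffset p A B \<subseteq> G \<union> {0}" "A \<subseteq> {..<p}" "B \<subseteq> {..<p}"
  shows "(SIGMA b:B. (A-{b}) \<times> (A-{b})) = (\<Union>l\<in>G. ratio_triples p A B l)"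
proof
  show "(SIGMA b:B. (A-{b}) \<times> (A-{b})) \<subseteq> (\<Union>l\<in>G. ratio_triples p A B l)"
  proof
    fix t assume "t \<in> (SIGMA b:B. (A-{b}) \<times> (A-{b}))"
    then obtain b a a' where t: "t = (b, a, a')" and "b \<in> B" "a \<in> A" "a \<noteq> b" "a' \<in> A" "a' \<noteq> b"
      by auto
    then obtain l where "l \<in> G" "fp_sub p a' b = fp_mul p l (fp_sub p a b)"
      using mult_subgroup_ratio[OF assms(1)] diffset_sub_mem[OF assms(2-4)] by meson
    then show "t \<in> (\<Union>l\<in>G. ratio_triples p A B l)"
      using \<open>b \<in> B\<close> \<open>a \<in> A\<close> \<open>a \<noteq> b\<close> \<open>a' \<in> A\<close> \<open>a' \<noteq> b\<close>
      unfolding t ratio_triples_def by blast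
  qed
qed (auto simp: ratio_triples_def)

lemma ratio_triples_invariant_diff:
  fixes g :: "nat \<Rightarrow> real"
  assumes "prime p" "diffset p A B \<subseteq> G \<union> {0}" "A \<subseteq> {..<p}" "B \<subseteq> {..<p}"
    and invariant: "\<forall>x<p. \<forall>\<gamma>\<in>G. g (fp_mul p \<gamma> x) = g x"
    and "(b, a, a') \<in> ratio_triples p A B l"
  shows "g (fp_sub p a' a) = g (fp_sub p l 1)"
proof -
  have p0: "0 < p"
    using assms(1) prime_gt_0_nat by blast
  have "b \<in> B" "a \<in> A" "a' \<in> A" "a \<noteq> b"
    and ratio: "fp_sub p a' b = fp_mul p l (fp_sub p a b)"
    using assms(6) unfolding ratio_triples_def by auto
  then have "a < p" "a' < p" "b < p"
    using assms(3,4) by auto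
  then have "fp_sub p a' a = fp_sub p (fp_sub p a' b) (fp_sub p a b)"
    by (rule fp_sub_sub_cancel[symmetric])
  also have "\<dots> = fp_mul p (fp_sub p a b) (fp_sub p l 1)"
    unfolding ratio by (rule fp_mul_sub_one[OF p0 fp_sub_less[OF p0]])
  finally show ?thesis
    using invariant fp_sub_less[OF p0] diffset_sub_mem[OF assms(2-4) \<open>a \<in> A\<close> \<open>b \<in> B\<close> \<open>a \<noteq> b\<close>]
    by simp
qed

lemma diff_sum_avoiding_eq_sum_ratio_triples:
  fixes g :: "nat \<Rightarrow> real"
  assumes "prime p" "mult_subgroup p G" "A \<subseteq> {..<p}" "B \<subseteq> {..<p}"
    and invariant: "\<forall>x<p. \<forall>\<gamma>\<in>G. g (fp_mul p \<gamma> x) = g x"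
    and diff: "diffset p A B \<subseteq> G \<union> {0}"
  shows "diff_sum_avoiding p A B g = (\<Sum>l\<in>G. g (fp_sub p l 1) * card (ratio_triples p A B l))"
proof -
  have "finite A" "finite B" "finite G"
    using assms(3,4) mult_subgroup_finite[OF assms(2)] finite_subset by blast+
  have disjoint: "ratio_triples p A B l \<inter> ratio_triples p A B l' = {}"
    if "l \<in> G" "l' \<in> G" "l \<noteq> l'" for l l'
    using ratio_triples_unique[OF assms(1,3,4)] mult_subgroup_memD[OF assms(2)] that by blast
  have "diff_sum_avoiding p A B g = (\<Sum>(b, a, a')\<in>(SIGMA b:B. (A-{b}) \<times> (A-{b})). g (fp_sub p a' a))"
    using \<open>finite A\<close> \<open>finite B\<close>
    by (simp add: diff_sum_avoiding_def sum.Sigma[symmetric] sum.cartesian_product[symmetric])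
  also have "\<dots> = (\<Sum>l\<in>G. \<Sum>(b, a, a')\<in>ratio_triples p A B l. g (fp_sub p a' a))"
    unfolding Sigma_remove_eq_UN_ratio_triples[OF assms(2,6,3,4)]
    using \<open>finite A\<close> \<open>finite B\<close> \<open>finite G\<close> finite_ratio_triples disjoint
    by (intro sum.UNION_disjoint) auto
  also have "\<dots> = (\<Sum>l\<in>G. \<Sum>t\<in>ratio_triples p A B l. g (fp_sub p l 1))"
    using ratio_triples_invariant_diff[OF assms(1,6,3,4) invariant] by (intro sum.cong) auto
  finally show ?thesis
    by (simp add: mult.commute)
qed

lemma diff_sum_avoiding_sq_le_T_AB:
  fixes g :: "nat \<Rightarrow> real"
  assumes "prime p" "mult_subgroup p G" "A \<subseteq> {..<p}" "B \<subseteq> {..<p}"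
    and invariant: "\<forall>x<p. \<forall>\<gamma>\<in>G. g (fp_mul p \<gamma> x) = g x"
    and diff: "diffset p A B \<subseteq> G \<union> {0}"
  shows "(diff_sum_avoiding p A B g)^2 * card G \<le> T_AB p A B * (\<Sum>x<p. (g x)^2 * circ p G G x)"
proof -
  define h where "h l = g (fp_sub p l 1)" for l
  define r where "r l = real (card (ratio_triples p A B l))" for l
  have p0: "0 < p"
    using assms(1) prime_gt_0_nat by blast
  have G_sub: "G \<subseteq> {..<p}"
    using mult_subgroup_memD[OF assms(2)] by auto
  have "(\<Sum>l\<in>G. (r l)^2) = real (\<Sum>l\<in>G. card (ratio_triples p A B l) ^ 2)"
    unfolding r_def by simp
  also have "\<dots> \<le> T_AB p A B"
    using sum_card_ratio_triples_sq_le_T_AB[OF assms(1,3,4) G_sub] by (simp only: of_nat_le_iff)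
  finally have r_le: "(\<Sum>l\<in>G. (r l)^2) \<le> T_AB p A B" .
  have "(diff_sum_avoiding p A B g)^2 = (\<Sum>l\<in>G. h l * r l)^2"
    unfolding diff_sum_avoiding_eq_sum_ratio_triples[OF assms] h_def r_def ..
  also have "\<dots> \<le> (\<Sum>l\<in>G. (h l)^2) * (\<Sum>l\<in>G. (r l)^2)"
    by (rule Cauchy_Schwarz_ineq_sum)
  also have "\<dots> \<le> (\<Sum>l\<in>G. (h l)^2) * T_AB p A B"
    by (rule mult_left_mono[OF r_le]) (simp add: sum_nonneg)
  finally have CS: "(diff_sum_avoiding p A B g)^2 \<le> (\<Sum>l\<in>G. (h l)^2) * T_AB p A B" .
  have "(\<Sum>x<p. (g x)^2 * circ p G G x) = (\<Sum>w\<in>G. \<Sum>z\<in>G. (g (fp_sub p z w))^2)"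
    by (rule circ_weighted_sum[OF p0 G_sub G_sub])
  also have "\<dots> = (\<Sum>w\<in>G. \<Sum>l\<in>G. (h l)^2)"
    using sum_mult_subgroup_sub[OF assms(1,2), of _ "\<lambda>x. (g x)^2"] invariant
    unfolding h_def by simp
  finally show ?thesis
    using mult_right_mono[OF CS, of "card G"] by (simp add: ac_simps)
qed

lemma square_le_of_scaled_le:
  fixes s M T S b c :: real
  assumes "0 \<le> b * s" "b * s \<le> 3 * M" "M^2 * c \<le> T * S" "0 < b" "0 < c"
  shows "s^2 \<le> 9 * (T / (b^2 * c)) * S"
proof -
  have "(b * s)^2 \<le> (3 * M)^2"
    using power_mono[OF assms(2,1)] .
  from mult_right_mono[OF this, of c] have "s^2 * (b^2 * c) \<le> 9 * (M^2 * c)"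
    using assms(5) by (simp add: power_mult_distrib ac_simps)
  also have "\<dots> \<le> 9 * (T * S)"
    using assms(3) by simp
  finally show ?thesis
    using assms(4,5) by (simp add: pos_le_divide_eq mult.assoc)
qed

theorem proposition4:
  "\<exists>c::real. c > 0 \<and>
    (\<forall>(p::nat) G A B (g::nat \<Rightarrow> real).
      prime p \<longrightarrow> mult_subgroup p G \<longrightarrow> A \<subseteq> {..<p} \<longrightarrow> B \<subseteq> {..<p} \<longrightarrow> B \<noteq> {} \<longrightarrow>
      (\<forall>x<p. g x \<ge> 0) \<longrightarrow>
      (\<forall>x<p. g (fp_neg p x) = g x) \<longrightarrow>
      (\<forall>x<p. \<forall>\<gamma>\<in>G. g (fp_mul p \<gamma> x) = g x) \<longrightarrow>
      (\<forall>x<p. g x \<noteq> 0 \<longrightarrow> x \<in> S_Gamma p G (diffset p A A)) \<longrightarrow>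
      diffset p A B \<subseteq> G \<union> {0} \<longrightarrow>
      real (card B) * (\<Sum>x<p. g x * circ p A A x) \<ge> 3 * (\<Sum>x<p. g x * circ p A B x) \<longrightarrow>
      (\<Sum>x<p. g x * circ p A A x)^2
        \<le> c * (real (T_AB p A B) / (real (card B)^2 * real (card G)))
            * (\<Sum>x<p. (g x)^2 * circ p G G x))"
proof (intro exI[of _ 9] conjI allI impI)
  fix p G A B and g :: "nat \<Rightarrow> real"
  assume p: "prime p" and G: "mult_subgroup p G" and A: "A \<subseteq> {..<p}" and B: "B \<subseteq> {..<p}"
    and "B \<noteq> {}" and nonneg: "\<forall>x<p. g x \<ge> 0" and even: "\<forall>x<p. g (fp_neg p x) = g x"
    and invariant: "\<forall>x<p. \<forall>\<gamma>\<in>G. g (fp_mul p \<gamma> x) = g x"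
    and "\<forall>x<p. g x \<noteq> 0 \<longrightarrow> x \<in> S_Gamma p G (diffset p A A)" \<comment> \<open>not needed for the bound\<close>
    and diff: "diffset p A B \<subseteq> G \<union> {0}"
    and popular: "real (card B) * (\<Sum>x<p. g x * circ p A A x) \<ge> 3 * (\<Sum>x<p. g x * circ p A B x)"
  have p0: "0 < p"
    using p prime_gt_0_nat by blast
  have "0 \<le> real (card B) * (\<Sum>x<p. g x * circ p A A x)"
    using nonneg by (auto intro!: mult_nonneg_nonneg sum_nonneg simp: circ_def)
  moreover have "real (card B) * (\<Sum>x<p. g x * circ p A A x) \<le> 3 * diff_sum_avoiding p A B g"
    by (rule card_mult_circ_le_diff_sum_avoiding[OF p0 A B nonneg even popular])
  moreover have "(diff_sum_avoiding p A B g)^2 * card G \<le> T_AB p A B * (\<Sum>x<p. (g x)^2 * circ p G G x)"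
    by (rule diff_sum_avoiding_sq_le_T_AB[OF p G A B invariant diff])
  moreover have "0 < real (card B)"
    using \<open>B \<noteq> {}\<close> finite_subset[OF B] by (simp add: card_gt_0_iff)
  moreover have "0 < real (card G)"
    using mult_subgroup_card_pos[OF G] by simp
  ultimately show "(\<Sum>x<p. g x * circ p A A x)^2
      \<le> 9 * (T_AB p A B / (real (card B)^2 * card G)) * (\<Sum>x<p. (g x)^2 * circ p G G x)"
    by (rule square_le_of_scaled_le)
qed simp

end
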